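(* For all $\lambda\in\mathbf{k}$ and $v\in\mathcal{V}^{\mathrm{B}}$, one has in $\mathcal{V}^{\mathrm{B}}\otimes\mathcal{V}^{\mathrm{B}}$: \[\Delta^{\mathcal{W},\mathrm{B}}\big(\lambda+v(X_1-1)\big)=\lambda\,(1\otimes1)+\mathsf{r}\underline{\mathrm{row}}\cdot\mathsf{r}\underline{\rho}(v)\cdot\mathsf{r}\underline{\mathrm{col}},\] i.e. $\Delta^{\mathcal{W},\mathrm{B}}$ followed by the inclusion $\mathcal{W}^{\mathrm{B}}\otimes\mathcal{W}^{\mathrm{B}}\hookrightarrow\mathcal{V}^{\mathrm{B}}\otimes\mathcal{V}^{\mathrm{B}}$ equals $\Delta_{\mathcal{O}^{\mathrm{B}}_{\mathsf{mat}}}$ composed with the isomorphism $\mathcal{W}^{\mathrm{B}}\cong\mathbf{k}\oplus(\mathcal{V}^{\mathrm{B}},\cdot_{X_1-1})$.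
   Context: $\mathbf{k}$ is a commutative $\mathbb{Q}$-algebra; $F_2$ free on $X_0,X_1$, $\mathcal{V}^{\mathrm{B}}=\mathbf{k}F_2$; in $\mathcal{V}^{\mathrm{B}}\otimes\mathcal{V}^{\mathrm{B}}$, $X_i=X_i\otimes1$, $Y_i=1\otimes X_i$. $\mathrm{op}_G$ is the antiautomorphism $g\mapsto g^{-1}$ of $\mathbf{k}G$. $\underline{\rho}:\mathcal{V}^{\mathrm{B}}\to M_3(\mathcal{V}^{\mathrm{B}}\otimes\mathcal{V}^{\mathrm{B}})$ is the algebra morphism with $\underline{\rho}(X_0)=\begin{pmatrix}X_0&0&0\\0&(1-X_1)X_0+Y_1^{-1}Y_0Y_1&(1-X_1)X_0X_1\\0&X_0-Y_1^{-1}Y_0Y_1X_1^{-1}&X_0X_1\end{pmatrix}$, $\underline{\rho}(X_1)=\begin{pmatrix}(X_1-1)Y_1+1&Y_1(1-Y_1)&0\\1-X_1&Y_1&0\\0&0&1\end{pmatrix}$; with $D=\mathrm{diag}(Y_1,X_1,(X_0X_1)^{-1}Y_1^{-1}Y_0Y_1)$, $\mathsf{r}\underline{\rho}(v):=D^{-1}M_3(\mathrm{op}_{F_2^2})({}^t\underline{\rho}(\mathrm{op}_{F_2}(v)))D$ (entrywise $\mathrm{op}$, transpose). $\mathsf{r}\underline{\mathrm{row}}=(Y_1,\,-X_1Y_1,\,0)\in M_{1,3}$, $\mathsf{r}\underline{\mathrm{col}}=Y_1^{-1}\,{}^t(X_1-1,\,1-Y_1,\,0)\in M_{3,1}$. For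 an algebra $B$ and $e\in B$, $\mathbf{k}\oplus(B,\cdot_e)$ is the algebra with product $(\lambda,b)(\lambda',b')=(\lambda\lambda',\lambda b'+\lambda'b+beb')$; $\Delta_{\mathcal{O}^{\mathrm{B}}_{\mathsf{mat}}}:\mathbf{k}\oplus(\mathcal{V}^{\mathrm{B}},\cdot_{X_1-1})\to\mathcal{V}^{\mathrm{B}}\otimes\mathcal{V}^{\mathrm{B}}$ is $(\lambda,v)\mapsto\lambda+\mathsf{r}\underline{\mathrm{row}}\,\mathsf{r}\underline{\rho}(v)\,\mathsf{r}\underline{\mathrm{col}}$. $\mathcal{W}^{\mathrm{B}}=\mathbf{k}\oplus\mathcal{V}^{\mathrm{B}}(X_1-1)$ is a subalgebra, isomorphic to $\mathbf{k}\oplus(\mathcal{V}^{\mathrm{B}},\cdot_{X_1-1})$ via $(\lambda,v)\mapsto\lambda+v(X_1-1)$; it is generated by $X_1^{-1}$ and $X_0^n(X_1-1)$, $n\in\mathbb{Z}$. $\Delta^{\mathcal{W},\mathrm{B}}:\mathcal{W}^{\mathrm{B}}\to\mathcal{W}^{\mathrm{B}}\otimes\mathcal{W}^{\mathrm{B}}$ is the (known to exist) algebra morphism with $\Delta^{\mathcal{W},\mathrm{B}}(X_1^{-1})=X_1^{-1}\otimes X_1^{-1}$ and $\Delta^{\mathcal{W},\mathrm{B}}(X_0^n(X_1-1))=X_0^n(X_1-1)\otimes1+1\otimes X_0^n(X_1-1)-\sum_{k=1}^{n-1}X_0^k(X_1-1)\otimes X_0^{n-k}(X_1-1)$ for $n\in\mathbb{Z}$,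 with the convention $\sum_{k=p}^qf(k)=f(p)+\dots+f(q)$ if $q>p-1$, $0$ if $q=p-1$, $-f(p-1)-\dots-f(q+1)$ if $q<p-1$. *)

theory Defs
  imports "HOL-Analysis.Analysis" "HOL-Library.Poly_Mapping" "HOL-Library.Product_Plus"
begin

text \<open>A letter (i, s): generator X_i (i = False means X0, i = True means X1),
  s = True means the inverse letter.\<close>
type_synonym letter = "bool \<times> bool"

definition linv :: "letter \<Rightarrow> letter" where
  "linv x = (fst x, \<not> snd x)"

inductive cancel1 :: "letter list \<Rightarrow> letter list \<Rightarrow> bool" where
  "cancel1 (a @ x # linv x # b) (a @ b)"

quotient_type F2 = "letter list" / "equivclp cancel1"
  by (rule equivp_evquivclp)

lemma equivclp_map_mono:
  assumes "\<And>x y. r x y \<Longrightarrow> r (f x) (f y)" and "equivclp r a b"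
  shows "equivclp r (f a) (f b)"
  using assms(2)
proof (induction rule: equivclp_induct)
  case base then show ?case by simp
next
  case (step y z)
  from step.hyps(2) have "r (f y) (f z) \<or> r (f z) (f y)" using assms(1) by blast
  with step.IH show ?case by (rule equivclp_into_equivclp)
qed

lemma cancel1_append_left: "cancel1 x y \<Longrightarrow> cancel1 (c @ x) (c @ y)"
proof (induction rule: cancel1.induct)
  case (1 a x b)
  show ?case using cancel1.intros[of "c @ a" x b] by simp
qed

lemma cancel1_append_right: "cancel1 x y \<Longrightarrow> cancel1 (x @ c) (y @ c)"
proof (induction rule: cancel1.induct)
  case (1 a x b)
  show ?case using cancel1.intros[of a x "b @ c"] by simp
qed

lemma equivclp_append:
  assumes "equivclp cancel1 a a'" "equivclp cancel1 b b'"
  shows "equivclp cancel1 (a @ b) (a' @ b')"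
proof -
  have "equivclp cancel1 (a @ b) (a' @ b)"
    using equivclp_map_mono[of cancel1 "\<lambda>x. x @ b", OF cancel1_append_right assms(1)] .
  moreover have "equivclp cancel1 (a' @ b) (a' @ b')"
    using equivclp_map_mono[of cancel1 "\<lambda>x. a' @ x", OF cancel1_append_left assms(2)] .
  ultimately show ?thesis by (rule equivclp_trans)
qed

definition winv :: "letter list \<Rightarrow> letter list" where
  "winv w = rev (map linv w)"

lemma linv_linv [simp]: "linv (linv x) = x"
  by (simp add: linv_def)

lemma cancel1_winv: "cancel1 x y \<Longrightarrow> cancel1 (winv x) (winv y)"
proof (induction rule: cancel1.induct)
  case (1 a x b)
  have e1: "winv (a @ x # linv x # b) = winv b @ x # linv x # winv a"
    by (simp add: winv_def)
  have e2: "winv (a @ b) = winv b @ winv a"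
    by (simp add: winv_def)
  show ?case unfolding e1 e2 by (rule cancel1.intros)
qed

lemma winv_cancel: "equivclp cancel1 (winv w @ w) []"
proof (induction w)
  case Nil then show ?case by (simp add: winv_def)
next
  case (Cons x w)
  have "cancel1 (winv w @ linv x # linv (linv x) # w) (winv w @ w)"
    by (rule cancel1.intros)
  then have "cancel1 (winv (x # w) @ x # w) (winv w @ w)"
    by (simp add: winv_def)
  then show ?case using Cons.IH by (meson r_into_equivclp equivclp_trans)
qed

instantiation F2 :: group_add
begin

lift_definition zero_F2 :: F2 is "[]" .

lift_definition plus_F2 :: "F2 \<Rightarrow> F2 \<Rightarrow> F2" is "(@)"
  by (rule equivclp_append)

lift_definition uminus_F2 :: "F2 \<Rightarrow> F2" is winv
  by (rule equivclp_map_mono[of cancel1 winv, OF cancel1_winv])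

definition minus_F2 :: "F2 \<Rightarrow> F2 \<Rightarrow> F2" where
  "minus_F2 a b = a + - b"

instance
proof
  fix a b c :: F2
  show "a + b + c = a + (b + c)" by transfer simp
  show "0 + a = a" by transfer simp
  show "a + 0 = a" by transfer simp
  show "- a + a = 0" by transfer (rule winv_cancel)
  show "a + - b = a - b" by (simp add: minus_F2_def)
qed

end

lift_definition gen :: "bool \<Rightarrow> F2" is "\<lambda>i. [(i, False)]" .

definition zpow :: "'g::group_add \<Rightarrow> int \<Rightarrow> 'g" where
  "zpow g n = (if 0 \<le> n then ((+) g ^^ nat n) 0 else - (((+) g ^^ nat (- n)) 0))"

text \<open>The group algebra k G of a group G (written additively) is the ring
  of finitely supported functions with convolution product.
  V^B = k F2 and V^B \<otimes> V^B = k (F2 \<times> F2).\<close>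
type_synonym 'k VB = "F2 \<Rightarrow>\<^sub>0 'k"
type_synonym 'k VB2 = "(F2 \<times> F2) \<Rightarrow>\<^sub>0 'k"

abbreviation scal :: "'k::zero \<Rightarrow> ('g::zero \<Rightarrow>\<^sub>0 'k)" where
  "scal c \<equiv> Poly_Mapping.single 0 c"

abbreviation grp :: "'g \<Rightarrow> ('g \<Rightarrow>\<^sub>0 'k::{zero,one})" where
  "grp g \<equiv> Poly_Mapping.single g 1"

definition opG :: "('g::group_add \<Rightarrow>\<^sub>0 'k::zero) \<Rightarrow> ('g \<Rightarrow>\<^sub>0 'k)" where
  "opG v = Abs_poly_mapping (\<lambda>g. Poly_Mapping.lookup v (- g))"

definition tens :: "'k::comm_ring_1 VB \<Rightarrow> 'k VB \<Rightarrow> 'k VB2" where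
  "tens a b = (\<Sum>g\<in>Poly_Mapping.keys a. \<Sum>h\<in>Poly_Mapping.keys b. Poly_Mapping.single (g, h) (Poly_Mapping.lookup a g * Poly_Mapping.lookup b h))"

abbreviation X :: "bool \<Rightarrow> 'k::comm_ring_1 VB" where "X i \<equiv> grp (gen i)"
abbreviation Xinv :: "bool \<Rightarrow> 'k::comm_ring_1 VB" where "Xinv i \<equiv> grp (- gen i)"
abbreviation X0pow :: "int \<Rightarrow> 'k::comm_ring_1 VB" where "X0pow n \<equiv> grp (zpow (gen False) n)"

text \<open>Elements of V^B \<otimes> V^B: X_i = X_i \<otimes> 1, Y_i = 1 \<otimes> X_i, and their inverses.\<close>
abbreviation XX :: "bool \<Rightarrow> 'k::comm_ring_1 VB2" where "XX i \<equiv> grp (gen i, 0)"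
abbreviation YY :: "bool \<Rightarrow> 'k::comm_ring_1 VB2" where "YY i \<equiv> grp (0, gen i)"
abbreviation XXi :: "bool \<Rightarrow> 'k::comm_ring_1 VB2" where "XXi i \<equiv> grp (- gen i, 0)"
abbreviation YYi :: "bool \<Rightarrow> 'k::comm_ring_1 VB2" where "YYi i \<equiv> grp (0, - gen i)"

type_synonym 'k M3 = "'k VB2 ^ 3 ^ 3"

definition mat3 :: "'a::zero list \<Rightarrow> 'a list \<Rightarrow> 'a list \<Rightarrow> 'a ^ 3 ^ 3" where
  "mat3 r1 r2 r3 = vector [vector r1, vector r2, vector r3]"

definition rhoX0 :: "'k::comm_ring_1 M3" where
  "rhoX0 = mat3
     [XX False, 0, 0]
     [0, (1 - XX True) * XX False + YYi True * YY False * YY True, (1 - XX True) * XX False * XX True]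
     [0, XX False - YYi True * YY False * YY True * XXi True, XX False * XX True]"

definition rhoX1 :: "'k::comm_ring_1 M3" where
  "rhoX1 = mat3
     [(XX True - 1) * YY True + 1, YY True * (1 - YY True), 0]
     [1 - XX True, YY True, 0]
     [0, 0, 1]"

definition rho_gen :: "bool \<Rightarrow> 'k::comm_ring_1 M3" where
  "rho_gen i = (if i then rhoX1 else rhoX0)"

definition rho_letter :: "letter \<Rightarrow> 'k::comm_ring_1 M3" where
  "rho_letter x = (if snd x then matrix_inv (rho_gen (fst x)) else rho_gen (fst x))"

definition rho_word :: "letter list \<Rightarrow> 'k::comm_ring_1 M3" where
  "rho_word w = foldr (\<lambda>x M. rho_letter x ** M) w (mat 1)"

definition rho_grp :: "F2 \<Rightarrow> 'k::comm_ring_1 M3" where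
  "rho_grp g = rho_word (rep_F2 g)"

definition mscale :: "'a::times \<Rightarrow> 'a ^ 'n ^ 'm \<Rightarrow> 'a ^ 'n ^ 'm" where
  "mscale c A = (\<chi> i j. c * A $ i $ j)"

definition rho :: "'k::comm_ring_1 VB \<Rightarrow> 'k M3" where
  "rho v = (\<Sum>g\<in>Poly_Mapping.keys v. mscale (scal (Poly_Mapping.lookup v g)) (rho_grp g))"

definition mop :: "('g::group_add \<Rightarrow>\<^sub>0 'k::zero) ^ 'n ^ 'm \<Rightarrow> ('g \<Rightarrow>\<^sub>0 'k) ^ 'n ^ 'm" where
  "mop A = (\<chi> i j. opG (A $ i $ j))"

definition Dmat :: "'k::comm_ring_1 M3" where
  "Dmat = mat3 [YY True, 0, 0] [0, XX True, 0]
                [0, 0, XXi True * XXi False * YYi True * YY False * YY True]"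

definition r_rho :: "'k::comm_ring_1 VB \<Rightarrow> 'k M3" where
  "r_rho v = matrix_inv Dmat ** mop (transpose (rho (opG v))) ** Dmat"

definition r_row :: "'k::comm_ring_1 VB2 ^ 3" where
  "r_row = vector [YY True, - (XX True * YY True), 0]"

definition r_col :: "'k::comm_ring_1 VB2 ^ 3" where
  "r_col = vector [YYi True * (XX True - 1), YYi True * (1 - YY True), 0]"

text \<open>row \<cdot> M \<cdot> col for a row vector, a 3x3 matrix and a column vector
  (noncommutative entries; order of factors respected).\<close>
definition row_mat_col :: "'a::semiring_1 ^ 3 \<Rightarrow> 'a ^ 3 ^ 3 \<Rightarrow> 'a ^ 3 \<Rightarrow> 'a" where
  "row_mat_col r M c = (\<Sum>i\<in>UNIV. \<Sum>j\<in>UNIV. r $ i * M $ i $ j * c $ j)"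

definition Delta_Omat :: "'k::comm_ring_1 \<Rightarrow> 'k VB \<Rightarrow> 'k VB2" where
  "Delta_Omat c v = scal c + row_mat_col r_row (r_rho v) r_col"

definition WB :: "'k::comm_ring_1 VB set" where
  "WB = {scal c + v * (X True - 1) | c v. True}"

definition gsum :: "int \<Rightarrow> int \<Rightarrow> (int \<Rightarrow> 'a::ab_group_add) \<Rightarrow> 'a" where
  "gsum p q f = (if p - 1 \<le> q then (\<Sum>k\<in>{p..q}. f k) else - (\<Sum>k\<in>{q+1..p-1}. f k))"

end

theory Submission
  imports Defs
begin

text \<open>For \<open>g \<in> F2\<close> let \<open>E(g) = r_row \<cdot> r\<rho>(g) \<cdot> r_col\<close>. Since \<open>r\<rho>\<close> restricts to a representation
  of \<open>F2\<close> with \<open>r\<rho>(X\<^sub>1) = 1 + r_col \<cdot> r_row\<close>, the linear extension of \<open>E\<close> is multiplicative for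
  \<open>v \<cdot>\<^bsub>X\<^sub>1-1\<^esub> w = v (X\<^sub>1 - 1) w\<close>, i.e. \<open>E(a X\<^sub>1 b) = E(a) E(b) + E(a b)\<close>. The map
  \<open>E'(g) = \<Delta>(g (X\<^sub>1 - 1))\<close> has the same property because \<open>\<Delta>\<close> is multiplicative on \<open>W\<^sup>B\<close>.
  Two such maps agree once they agree on the powers of \<open>X\<^sub>0\<close>, by induction over words, using
  that \<open>1 + E(1) = X\<^sub>1 \<otimes> X\<^sub>1\<close> is a unit. On \<open>X\<^sub>0\<^sup>n\<close> the value of \<open>E'\<close> is the hypothesis on the
  generators, and that of \<open>E\<close> follows from a closed form for \<open>r\<rho>(X\<^sub>0\<^sup>n) \<cdot> r_col\<close>, proved by
  induction on \<open>n\<close>. Both sides of the theorem are then linear in \<open>v\<close>.\<close>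

lemma grp_mult_grp: "(grp a :: 'g::monoid_add \<Rightarrow>\<^sub>0 'k::semiring_1) * grp b = grp (a + b)"
  by (simp add: mult_single)

lemma grp_mult_grp_mult:
  "(grp a :: 'g::monoid_add \<Rightarrow>\<^sub>0 'k::semiring_1) * (grp b * c) = grp (a + b) * c"
  by (simp add: mult_single flip: mult.assoc)

lemma grp_zero_pair: "(grp (0, 0) :: 'g::monoid_add \<times> 'h::monoid_add \<Rightarrow>\<^sub>0 'k::semiring_1) = 1"
  by (simp flip: zero_prod_def)

text \<open>Words of the non-abelian group \<open>F2\<close> are normalised by right association with \<open>a - b\<close>
  unfolded to \<open>a + - b\<close>; wherever this set is used, \<open>add_uminus_conv_diff\<close> has to be removed
  from the simpset, since it undoes that rewrite and loops.\<close>
lemmas group_ring_simps = algebra_simps grp_mult_grp grp_mult_grp_mult grp_zero_pair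
  diff_conv_add_uminus[where 'a=F2] add.assoc[where 'a=F2] minus_add[where 'a=F2]
  add_minus_cancel[where 'a=F2] minus_add_cancel[where 'a=F2] right_minus[where 'a=F2]
  left_minus[where 'a=F2] minus_minus[where 'a=F2]

lemma poly_mapping_sum_single:
  "v = (\<Sum>g\<in>Poly_Mapping.keys v. Poly_Mapping.single g (Poly_Mapping.lookup v g))"
  by (rule poly_mapping_eqI) (simp add: lookup_sum lookup_single when_def sum.delta' in_keys_iff)

lemma times_poly_mapping_expand:
  "(a :: 'g::monoid_add \<Rightarrow>\<^sub>0 'k::semiring_1) * b =
   (\<Sum>g\<in>Poly_Mapping.keys a. \<Sum>h\<in>Poly_Mapping.keys b.
      Poly_Mapping.single (g + h) (Poly_Mapping.lookup a g * Poly_Mapping.lookup b h))"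
proof -
  have "a * b = (\<Sum>g\<in>Poly_Mapping.keys a. Poly_Mapping.single g (Poly_Mapping.lookup a g))
              * (\<Sum>h\<in>Poly_Mapping.keys b. Poly_Mapping.single h (Poly_Mapping.lookup b h))"
    by (simp only: flip: poly_mapping_sum_single)
  also have "\<dots> = (\<Sum>g\<in>Poly_Mapping.keys a. \<Sum>h\<in>Poly_Mapping.keys b.
      Poly_Mapping.single g (Poly_Mapping.lookup a g) * Poly_Mapping.single h (Poly_Mapping.lookup b h))"
    by (simp only: sum_distrib_right) (simp only: sum_distrib_left)
  finally show ?thesis
    by (simp only: mult_single)
qed

lemma scal_mult_commute: "scal c * (x :: 'g::monoid_add \<Rightarrow>\<^sub>0 'k::comm_semiring_1) = x * scal c"
proof -
  have "scal c * x = (\<Sum>g\<in>Poly_Mapping.keys x. scal c * Poly_Mapping.single g (Poly_Mapping.lookup x g))"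
    by (subst poly_mapping_sum_single[of x]) (simp add: sum_distrib_left)
  also have "\<dots> = (\<Sum>g\<in>Poly_Mapping.keys x. Poly_Mapping.single g (Poly_Mapping.lookup x g) * scal c)"
    by (simp add: mult_single mult.commute)
  also have "\<dots> = x * scal c"
    by (subst (3) poly_mapping_sum_single[of x]) (simp add: sum_distrib_right)
  finally show ?thesis .
qed

lemma scal_mult_left_commute:
  "a * (scal c * b) = scal c * (a * b :: 'g::monoid_add \<Rightarrow>\<^sub>0 'k::comm_semiring_1)"
  by (metis mult.assoc scal_mult_commute)

lemma single_mult_eq_scal_grp:
  "Poly_Mapping.single g c * x = scal c * (grp g * x :: 'g::monoid_add \<Rightarrow>\<^sub>0 'k::semiring_1)"
  by (simp add: mult_single flip: mult.assoc)

lemma lookup_opG: "Poly_Mapping.lookup (opG v) g = Poly_Mapping.lookup v (- g)"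
proof -
  have "{g. Poly_Mapping.lookup v (- g) \<noteq> 0} \<subseteq> uminus ` {x. Poly_Mapping.lookup v x \<noteq> 0}"
    by (auto intro: image_eqI[where x="- _"])
  then have "finite {g. Poly_Mapping.lookup v (- g) \<noteq> 0}"
    using finite_subset finite_imageI finite_lookup by blast
  then show ?thesis by (simp add: opG_def)
qed

lemma keys_opG: "Poly_Mapping.keys (opG v) = uminus ` Poly_Mapping.keys v"
  by (force simp: in_keys_iff lookup_opG intro: image_eqI[where x="- _"])

lemma opG_zero: "opG 0 = 0"
  by (rule poly_mapping_eqI) (simp add: lookup_opG)

lemma opG_add: "opG (a + b) = opG a + opG b"
  by (rule poly_mapping_eqI) (simp add: lookup_opG lookup_add)

lemma opG_diff: "opG (a - b) = opG a - opG (b :: 'g::group_add \<Rightarrow>\<^sub>0 'k::ab_group_add)"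
  by (rule poly_mapping_eqI) (simp add: lookup_opG lookup_minus)

lemma opG_uminus: "opG (- a) = - opG (a :: 'g::group_add \<Rightarrow>\<^sub>0 'k::ab_group_add)"
  by (rule poly_mapping_eqI) (simp add: lookup_opG)

lemma opG_single: "opG (Poly_Mapping.single g c) = Poly_Mapping.single (- g) c"
  by (rule poly_mapping_eqI) (auto simp: lookup_opG lookup_single when_def)

lemma opG_one: "opG (1 :: 'g::group_add \<Rightarrow>\<^sub>0 'k::semiring_1) = 1"
  by (simp add: opG_single flip: single_one)

lemma opG_sum: "opG (sum f A) = (\<Sum>x\<in>A. opG (f x))"
  by (induction A rule: infinite_finite_induct) (simp_all add: opG_zero opG_add)

lemma opG_expand:
  "opG v = (\<Sum>g\<in>Poly_Mapping.keys v. Poly_Mapping.single (- g) (Poly_Mapping.lookup v g))"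
  by (subst (1) poly_mapping_sum_single) (simp only: opG_sum opG_single)

lemma opG_mult: "opG (a * b) = opG b * opG (a :: 'g::group_add \<Rightarrow>\<^sub>0 'k::comm_semiring_1)"
proof -
  have "opG (a * b) = (\<Sum>g\<in>Poly_Mapping.keys a. \<Sum>h\<in>Poly_Mapping.keys b.
      Poly_Mapping.single (- h + - g) (Poly_Mapping.lookup b h * Poly_Mapping.lookup a g))"
    by (simp add: times_poly_mapping_expand opG_sum opG_single minus_add mult.commute)
  also have "\<dots> = (\<Sum>h\<in>Poly_Mapping.keys b. \<Sum>g\<in>Poly_Mapping.keys a.
      Poly_Mapping.single (- h + - g) (Poly_Mapping.lookup b h * Poly_Mapping.lookup a g))"
    by (rule sum.swap)
  also have "\<dots> = (\<Sum>h\<in>Poly_Mapping.keys b. Poly_Mapping.single (- h) (Poly_Mapping.lookup b h)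
      * (\<Sum>g\<in>Poly_Mapping.keys a. Poly_Mapping.single (- g) (Poly_Mapping.lookup a g)))"
    by (simp only: sum_distrib_left mult_single)
  also have "\<dots> = opG b * opG a"
    by (simp only: opG_expand[of a] opG_expand[of b] sum_distrib_right)
  finally show ?thesis .
qed

lemmas opG_simps = opG_zero opG_add opG_diff opG_uminus opG_mult opG_single opG_one

lemma tens_eq_sum_superset:
  assumes "finite S" "finite T" "Poly_Mapping.keys a \<subseteq> S" "Poly_Mapping.keys b \<subseteq> T"
  shows "tens a b = (\<Sum>g\<in>S. \<Sum>h\<in>T.
           Poly_Mapping.single (g, h) (Poly_Mapping.lookup a g * Poly_Mapping.lookup b h))"
proof -
  have "tens a b = (\<Sum>g\<in>Poly_Mapping.keys a. \<Sum>h\<in>T.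
           Poly_Mapping.single (g, h) (Poly_Mapping.lookup a g * Poly_Mapping.lookup b h))"
    unfolding tens_def
    by (rule sum.cong[OF refl], rule sum.mono_neutral_left) (use assms in \<open>auto simp: in_keys_iff\<close>)
  also have "\<dots> = (\<Sum>g\<in>S. \<Sum>h\<in>T.
           Poly_Mapping.single (g, h) (Poly_Mapping.lookup a g * Poly_Mapping.lookup b h))"
    by (rule sum.mono_neutral_left) (use assms in \<open>auto simp: in_keys_iff\<close>)
  finally show ?thesis .
qed

lemma tens_diff_left: "tens (a - a') b = tens a b - tens a' b"
proof -
  let ?S = "Poly_Mapping.keys a \<union> Poly_Mapping.keys a'" and ?T = "Poly_Mapping.keys b"
  have "Poly_Mapping.keys (a - a') \<subseteq> ?S" by (rule keys_diff)
  then show ?thesis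
    by (simp add: tens_eq_sum_superset[of ?S ?T] lookup_minus left_diff_distrib single_diff
        sum_subtractf)
qed

lemma tens_diff_right: "tens a (b - b') = tens a b - tens a b'"
proof -
  let ?S = "Poly_Mapping.keys a" and ?T = "Poly_Mapping.keys b \<union> Poly_Mapping.keys b'"
  have "Poly_Mapping.keys (b - b') \<subseteq> ?T" by (rule keys_diff)
  then show ?thesis
    by (simp add: tens_eq_sum_superset[of ?S ?T] lookup_minus right_diff_distrib single_diff
        sum_subtractf)
qed

lemma tens_grp: "tens (grp g) (grp h) = (grp (g, h) :: 'k::comm_ring_1 VB2)"
  by (simp add: tens_def)

lemma tens_grp_one: "tens (grp g) 1 = (grp (g, 0) :: 'k::comm_ring_1 VB2)"
  using tens_grp[where 'k='k, of g 0] by simp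

lemma tens_one_grp: "tens 1 (grp g) = (grp (0, g) :: 'k::comm_ring_1 VB2)"
  using tens_grp[where 'k='k, of 0 g] by simp

lemma zpow_zero [simp]: "zpow g 0 = 0"
  by (simp add: zpow_def)

lemma funpow_add_commute: "((+) g ^^ m) 0 + g = g + ((+) g ^^ m) (0::'g::group_add)"
  by (induction m) (simp_all add: add.assoc)

lemma zpow_succ: "zpow g (n + 1) = g + zpow (g::'g::group_add) n"
proof (cases "0 \<le> n")
  case True
  then have "nat (n + 1) = Suc (nat n)" by simp
  with True show ?thesis by (simp add: zpow_def)
next
  case False
  show ?thesis
  proof (cases "n = -1")
    case True
    then show ?thesis by (simp add: zpow_def)
  next
    case n: False
    define P where "P = ((+) g ^^ nat (- (n + 1))) 0"
    have "nat (- n) = Suc (nat (- (n + 1)))" using False n by arith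
    then have "zpow g n = - (g + P)" using False by (simp add: zpow_def P_def)
    moreover have "zpow g (n + 1) = - P" using False n by (simp add: zpow_def P_def)
    moreover have "g + - (P + g) = - P"
      by (simp add: minus_add add.assoc del: add_uminus_conv_diff)
    ultimately show ?thesis by (simp add: P_def funpow_add_commute)
  qed
qed

lemma zpow_pred: "zpow g (n - 1) = - g + zpow (g::'g::group_add) n"
  using zpow_succ[of g "n - 1"] by (simp add: minus_add_cancel del: add_uminus_conv_diff)

lemma zpow_add_commute: "zpow g n + g = g + zpow (g::'g::group_add) n"
proof (induction n rule: int_induct[where k=0])
  case (step1 i)
  then show ?case by (simp add: zpow_succ add.assoc)
next
  case (step2 i)
  have "zpow g (i - 1) + g = - g + (zpow g i + g)"
    by (simp add: zpow_pred add.assoc del: add_uminus_conv_diff)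
  also have "\<dots> = zpow g i"
    using step2 by (simp add: add.assoc[symmetric] del: add_uminus_conv_diff)
  also have "\<dots> = g + zpow g (i - 1)"
    by (simp add: zpow_pred add.assoc[symmetric] del: add_uminus_conv_diff)
  finally show ?case .
qed simp

lemma zpow_add_minus_commute: "zpow g n + - g = - g + zpow (g::'g::group_add) n"
proof -
  have "zpow g n + - g = - g + (g + zpow g n) + - g"
    by (simp add: add.assoc[symmetric] del: add_uminus_conv_diff)
  also have "\<dots> = - g + (zpow g n + g) + - g"
    by (simp add: zpow_add_commute)
  also have "\<dots> = - g + zpow g n"
    by (simp add: add.assoc del: add_uminus_conv_diff)
  finally show ?thesis .
qed

lemma zpow_add_left_commute: "zpow g n + (g + x) = g + (zpow (g::'g::group_add) n + x)"
  by (simp flip: add.assoc add: zpow_add_commute)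

lemma zpow_add_minus_left_commute: "zpow g n + (- g + x) = - g + (zpow (g::'g::group_add) n + x)"
  by (simp flip: add.assoc add: zpow_add_minus_commute del: add_uminus_conv_diff)

lemma zpow_one: "zpow g 1 = (g::'g::group_add)"
  using zpow_succ[of g 0] by simp

lemma zpow_one_add: "zpow g (1 + n) = g + zpow (g::'g::group_add) n"
  using zpow_succ[of g n] by (simp add: add.commute)

lemma zpow_minus_one_add: "zpow g (- 1 + n) = - g + zpow (g::'g::group_add) n"
  using zpow_pred[of g n] by simp

lemmas zpow_simps = zpow_succ zpow_pred zpow_one zpow_one_add zpow_minus_one_add
  zpow_add_commute zpow_add_minus_commute zpow_add_left_commute zpow_add_minus_left_commute

lemma gsum_last: "gsum p q f = gsum p (q - 1) f + f (q :: int)"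
proof (cases "p \<le> q")
  case True
  then have "{p..q} = insert q {p..q - 1}" by auto
  with True show ?thesis by (simp add: gsum_def)
next
  case False
  show ?thesis
  proof (cases "q = p - 1")
    case False': False
    with False have "{q..p - 1} = insert q {q + 1..p - 1}" by auto
    with False False' show ?thesis by (simp add: gsum_def)
  qed (simp add: gsum_def)
qed

lemma gsum_first: "gsum p q f = f p + gsum (p + 1) q (f :: int \<Rightarrow> 'a::ab_group_add)"
proof (cases "p \<le> q")
  case True
  then have "{p..q} = insert p {p + 1..q}" by auto
  with True show ?thesis by (simp add: gsum_def)
next
  case False
  show ?thesis
  proof (cases "q = p - 1")
    case False': False
    with False have "{q + 1..p} = insert p {q + 1..p - 1}" by auto
    with False False' show ?thesis by (simp add: gsum_def)
  qed (simp add: gsum_def)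
qed

lemma gsum_shift: "gsum p q (\<lambda>k. f (k + 1)) = gsum (p + 1) (q + 1) f"
proof -
  have "(\<Sum>k\<in>{a..b}. f (k + 1)) = (\<Sum>k\<in>{a + 1..b + 1}. f k)" for a b
    by (rule sum.reindex_bij_witness[of _ "\<lambda>k. k - 1" "\<lambda>k. k + 1"]) auto
  from this[of p q] this[of "q + 1" "p - 1"] show ?thesis
    by (simp add: gsum_def)
qed

lemma gsum_mult_left: "c * gsum p q f = gsum p q (\<lambda>k. c * f k :: 'a::ring)"
  by (simp add: gsum_def sum_distrib_left)

lemma gsum_cong: "(\<And>k. f k = g k) \<Longrightarrow> gsum p q f = gsum p q g"
  by (subgoal_tac "f = g") auto

lemma abs_F2_rep_F2: "abs_F2 (rep_F2 g) = g"
  by (rule Quotient3_abs_rep[OF Quotient3_F2])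

lemma abs_F2_Nil: "abs_F2 [] = 0"
  by (simp add: zero_F2.abs_eq)

lemma abs_F2_append: "abs_F2 (v @ w) = abs_F2 v + abs_F2 w"
  by (simp add: plus_F2.abs_eq)

lemma abs_F2_letter: "abs_F2 [(i, False)] = gen i" "abs_F2 [(i, True)] = - gen i"
proof -
  show "abs_F2 [(i, False)] = gen i" by (simp add: gen.abs_eq)
  have "- abs_F2 [(i, False)] = abs_F2 [(i, True)]"
    by (simp add: uminus_F2.abs_eq winv_def linv_def)
  then show "abs_F2 [(i, True)] = - gen i" by (simp add: gen.abs_eq)
qed

lemma F2_induct [case_names zero plus_gen plus_minus_gen]:
  assumes "P 0"
    and "\<And>g i. P g \<Longrightarrow> P (g + gen i)"
    and "\<And>g i. P g \<Longrightarrow> P (g + - gen i)"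
  shows "P g"
proof -
  have "P (abs_F2 w)" for w
  proof (induction w rule: rev_induct)
    case Nil
    with assms(1) show ?case by (simp add: abs_F2_Nil)
  next
    case (snoc x w)
    obtain i s where "x = (i, s)" by (cases x)
    with snoc assms(2,3) show ?case
      by (cases s) (simp_all add: abs_F2_append abs_F2_letter)
  qed
  from this[of "rep_F2 g"] show ?thesis by (simp add: abs_F2_rep_F2)
qed

text \<open>Extended linearly to \<open>k F2\<close>, \<open>E\<close> is multiplicative for the product
  \<open>v \<cdot>\<^bsub>X\<^sub>1-1\<^esub> w = v (X\<^sub>1 - 1) w\<close>, since \<open>a \<cdot>\<^bsub>X\<^sub>1-1\<^esub> b = a X\<^sub>1 b - a b\<close> on group elements.\<close>
definition twisted_mult :: "(F2 \<Rightarrow> 'a::ring) \<Rightarrow> bool" where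
  "twisted_mult E \<longleftrightarrow> (\<forall>a b. E (a + gen True + b) = E a * E b + E (a + b))"

lemma twisted_mult_minus_X1:
  assumes "twisted_mult (E :: F2 \<Rightarrow> 'a::ring_1)"
  shows "E g = E (g + - gen True) * (1 + E 0)"
proof -
  have "E (g + - gen True + gen True + 0) = E (g + - gen True) * E 0 + E (g + - gen True + 0)"
    using assms unfolding twisted_mult_def by blast
  then show ?thesis by (simp add: distrib_left add.assoc del: add_uminus_conv_diff)
qed

lemma twisted_mult_eq_plus_minus_X1:
  fixes E E' :: "F2 \<Rightarrow> 'a::ring_1"
  assumes E: "twisted_mult E" and E': "twisted_mult E'"
    and "E 0 = E' 0" and unit: "(1 + E 0) * u = 1" and "E g = E' g"
  shows "E (g + - gen True) = E' (g + - gen True)"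
proof -
  have "E (g + - gen True) * (1 + E 0) = E' (g + - gen True) * (1 + E 0)"
    using twisted_mult_minus_X1[OF E, of g] twisted_mult_minus_X1[OF E', of g] assms(3,5) by simp
  then have "E (g + - gen True) * (1 + E 0) * u = E' (g + - gen True) * (1 + E 0) * u" by simp
  then show ?thesis by (simp add: mult.assoc unit)
qed

text \<open>Induction over words \<open>g X\<^sub>0\<^sup>n\<close>: right multiplication of \<open>g\<close> by \<open>X\<^sub>1\<close> is controlled by the
  multiplicativity, and right multiplication by \<open>X\<^sub>1\<^sup>-\<^sup>1\<close> by cancelling the unit \<open>1 + E 0\<close>.\<close>
lemma twisted_mult_eqI:
  fixes E E' :: "F2 \<Rightarrow> 'a::ring_1"
  assumes E: "twisted_mult E" and E': "twisted_mult E'"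
    and X0pow: "\<And>n. E (zpow (gen False) n) = E' (zpow (gen False) n)"
    and unit: "(1 + E 0) * u = 1"
  shows "E = E'"
proof -
  have "E (g + zpow (gen False) n) = E' (g + zpow (gen False) n)" for g n
  proof (induction g arbitrary: n rule: F2_induct)
    case zero
    then show ?case by (simp add: X0pow)
  next
    case (plus_gen g i)
    show ?case
    proof (cases i)
      case False
      then have "g + gen i + zpow (gen False) n = g + zpow (gen False) (n + 1)"
        by (simp add: zpow_succ add.assoc)
      with plus_gen show ?thesis by simp
    next
      case True
      with plus_gen[of 0] plus_gen[of n] X0pow[of n] E E' show ?thesis
        by (simp add: twisted_mult_def)
    qed
  next
    case (plus_minus_gen g i)
    show ?case
    proof (cases i)
      case False
      then have "g + - gen i + zpow (gen False) n = g + zpow (gen False) (n - 1)"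
        by (simp add: zpow_pred add.assoc del: add_uminus_conv_diff)
      with plus_minus_gen show ?thesis by simp
    next
      case True
      have "E (g + - gen True) = E' (g + - gen True)"
        using twisted_mult_eq_plus_minus_X1[OF E E' _ unit] plus_minus_gen[of 0] X0pow[of 0] by simp
      moreover have "g + - gen True + gen True + zpow (gen False) n = g + zpow (gen False) n"
        by (simp add: add.assoc del: add_uminus_conv_diff)
      ultimately show ?thesis
        using E E' plus_minus_gen[of n] X0pow[of n] True unfolding twisted_mult_def
        by (metis add_left_cancel)
    qed
  qed
  from this[of _ 0] show ?thesis by (simp add: fun_eq_iff)
qed

lemma mat3_nth [simp]:
  "mat3 [a,b,c] r2 r3 $ 1 $ 1 = a" "mat3 [a,b,c] r2 r3 $ 1 $ 2 = b" "mat3 [a,b,c] r2 r3 $ 1 $ 3 = c"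
  "mat3 r1 [a,b,c] r3 $ 2 $ 1 = a" "mat3 r1 [a,b,c] r3 $ 2 $ 2 = b" "mat3 r1 [a,b,c] r3 $ 2 $ 3 = c"
  "mat3 r1 r2 [a,b,c] $ 3 $ 1 = a" "mat3 r1 r2 [a,b,c] $ 3 $ 2 = b" "mat3 r1 r2 [a,b,c] $ 3 $ 3 = c"
  by (simp_all add: mat3_def)

lemma mat_nth3 [simp]:
  "(mat x :: 'a::zero^3^3) $ 1 $ 1 = x" "(mat x :: 'a::zero^3^3) $ 1 $ 2 = 0"
  "(mat x :: 'a::zero^3^3) $ 1 $ 3 = 0" "(mat x :: 'a::zero^3^3) $ 2 $ 1 = 0"
  "(mat x :: 'a::zero^3^3) $ 2 $ 2 = x" "(mat x :: 'a::zero^3^3) $ 2 $ 3 = 0"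
  "(mat x :: 'a::zero^3^3) $ 3 $ 1 = 0" "(mat x :: 'a::zero^3^3) $ 3 $ 2 = 0"
  "(mat x :: 'a::zero^3^3) $ 3 $ 3 = x"
  by (simp_all add: mat_def)

lemma mat3_eqI:
  fixes A :: "'a^3^3"
  assumes "A$1$1 = B$1$1" "A$1$2 = B$1$2" "A$1$3 = B$1$3"
    "A$2$1 = B$2$1" "A$2$2 = B$2$2" "A$2$3 = B$2$3"
    "A$3$1 = B$3$1" "A$3$2 = B$3$2" "A$3$3 = B$3$3"
  shows "A = B"
  using assms unfolding vec_eq_iff forall_3 by auto

lemma vec3_eqI:
  fixes a :: "'a^3"
  assumes "a$1 = b$1" "a$2 = b$2" "a$3 = b$3"
  shows "a = b"
  using assms unfolding vec_eq_iff forall_3 by auto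

lemma matrix_matrix_mult_nth3:
  "((A::'a::semiring_1^3^3) ** B) $ i $ j = A$i$1 * B$1$j + A$i$2 * B$2$j + A$i$3 * B$3$j"
  by (simp add: matrix_matrix_mult_def sum_3)

lemma matrix_vector_mult_nth3:
  "((A::'a::semiring_1^3^3) *v v) $ i = A$i$1 * v$1 + A$i$2 * v$2 + A$i$3 * v$3"
  by (simp add: matrix_vector_mult_def sum_3)

lemma matrix_add_rdistrib: "(A + B) ** C = A ** C + B ** (C::'a::semiring_1^'n^'m)"
  by (simp add: matrix_matrix_mult_def vec_eq_iff distrib_right sum.distrib)

lemma matrix_mult_sum_left: "A ** sum f K = (\<Sum>g\<in>K. A ** (f g :: 'a::semiring_1^'n^'m))"
  by (induction K rule: infinite_finite_induct) (simp_all add: matrix_add_ldistrib)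

lemma matrix_mult_sum_right: "sum f K ** A = (\<Sum>g\<in>K. f g ** (A :: 'a::semiring_1^'n^'m))"
  by (induction K rule: infinite_finite_induct) (simp_all add: matrix_add_rdistrib)

lemma matrix_inv_unique:
  fixes A B :: "'a::semiring_1^'n^'n"
  assumes "A ** B = mat 1" "B ** A = mat 1"
  shows "matrix_inv A = B"
proof -
  have "\<exists>A'. A ** A' = mat 1 \<and> A' ** A = mat 1" using assms by blast
  then have "matrix_inv A ** A = mat 1"
    unfolding matrix_inv_def by (rule someI2_ex) blast
  then have "matrix_inv A = matrix_inv A ** (A ** B)" by (simp add: assms)
  also have "\<dots> = B" by (simp add: matrix_mul_assoc \<open>matrix_inv A ** A = mat 1\<close>)
  finally show ?thesis .
qed

section \<open>The representation \<open>\<rho>\<close>\<close>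

definition rhoX0inv :: "'k::comm_ring_1 M3" where
  "rhoX0inv = mat3 [XXi False, 0, 0]
     [0, XX True * (YYi True * YYi False * YY True),
         XX True * (XX True - 1) * (YYi True * YYi False * YY True)]
     [0, XXi True * XXi False - YYi True * YYi False * YY True,
         YYi True * YYi False * YY True + XXi True * XXi False * XX True
         - XX True * (YYi True * YYi False * YY True)]"

definition rhoX1inv :: "'k::comm_ring_1 M3" where
  "rhoX1inv = mat3 [XXi True, - (XXi True * (1 - YY True)), 0]
     [YYi True * (1 - XXi True), XXi True * YYi True * ((XX True - 1) * YY True + 1), 0]
     [0, 0, 1]"

definition Dmat_inv :: "'k::comm_ring_1 M3" where
  "Dmat_inv = mat3 [YYi True, 0, 0] [0, XXi True, 0]
     [0, 0, YYi True * YYi False * YY True * XX False * XX True]"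

lemma rhoX0_mult_inv: "rhoX0 ** rhoX0inv = (mat 1 :: 'k::comm_ring_1 M3)"
  and rhoX0_inv_mult: "rhoX0inv ** rhoX0 = (mat 1 :: 'k::comm_ring_1 M3)"
  by (rule mat3_eqI;
      simp add: matrix_matrix_mult_nth3 rhoX0_def rhoX0inv_def group_ring_simps
        del: add_uminus_conv_diff)+

lemma rhoX1_mult_inv: "rhoX1 ** rhoX1inv = (mat 1 :: 'k::comm_ring_1 M3)"
  and rhoX1_inv_mult: "rhoX1inv ** rhoX1 = (mat 1 :: 'k::comm_ring_1 M3)"
  by (rule mat3_eqI;
      simp add: matrix_matrix_mult_nth3 rhoX1_def rhoX1inv_def group_ring_simps
        del: add_uminus_conv_diff)+

lemma Dmat_mult_inv: "Dmat ** Dmat_inv = (mat 1 :: 'k::comm_ring_1 M3)"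
  and Dmat_inv_mult: "Dmat_inv ** Dmat = (mat 1 :: 'k::comm_ring_1 M3)"
  by (rule mat3_eqI;
      simp add: matrix_matrix_mult_nth3 Dmat_def Dmat_inv_def group_ring_simps
        del: add_uminus_conv_diff)+

lemma matrix_inv_rhoX0: "matrix_inv rhoX0 = (rhoX0inv :: 'k::comm_ring_1 M3)"
  by (rule matrix_inv_unique[OF rhoX0_mult_inv rhoX0_inv_mult])

lemma matrix_inv_rhoX1: "matrix_inv rhoX1 = (rhoX1inv :: 'k::comm_ring_1 M3)"
  by (rule matrix_inv_unique[OF rhoX1_mult_inv rhoX1_inv_mult])

lemma matrix_inv_Dmat: "matrix_inv Dmat = (Dmat_inv :: 'k::comm_ring_1 M3)"
  by (rule matrix_inv_unique[OF Dmat_mult_inv Dmat_inv_mult])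

lemma rho_letter_mult_linv: "(rho_letter x :: 'k::comm_ring_1 M3) ** rho_letter (linv x) = mat 1"
  by (cases x) (auto simp: rho_letter_def linv_def rho_gen_def matrix_inv_rhoX0 matrix_inv_rhoX1
      rhoX0_mult_inv rhoX0_inv_mult rhoX1_mult_inv rhoX1_inv_mult)

lemma rho_word_append: "(rho_word (v @ w) :: 'k::comm_ring_1 M3) = rho_word v ** rho_word w"
  by (induction v) (simp_all add: rho_word_def matrix_mul_assoc)

lemma rho_word_cancel1: "cancel1 v w \<Longrightarrow> (rho_word v :: 'k::comm_ring_1 M3) = rho_word w"
proof (induction rule: cancel1.induct)
  case (1 a x b)
  have "(rho_word (x # linv x # b) :: 'k M3) = (rho_letter x ** rho_letter (linv x)) ** rho_word b"
    by (simp add: rho_word_def matrix_mul_assoc)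
  then show ?case by (simp add: rho_word_append rho_letter_mult_linv)
qed

lemma rho_word_equivclp:
  "equivclp cancel1 v w \<Longrightarrow> (rho_word v :: 'k::comm_ring_1 M3) = rho_word w"
proof (induction rule: equivclp_induct)
  case (step y z)
  then show ?case by (metis rho_word_cancel1)
qed simp

lemma rho_grp_abs_F2: "(rho_grp (abs_F2 w) :: 'k::comm_ring_1 M3) = rho_word w"
proof -
  have "equivclp cancel1 (rep_F2 (abs_F2 w)) w"
    by (rule Quotient3_rep_abs[OF Quotient3_F2]) simp
  then show ?thesis unfolding rho_grp_def by (rule rho_word_equivclp)
qed

lemma rho_grp_add: "(rho_grp (g + h) :: 'k::comm_ring_1 M3) = rho_grp g ** rho_grp h"
  by (metis abs_F2_rep_F2 abs_F2_append rho_grp_abs_F2 rho_word_append)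

lemma rho_grp_zero: "(rho_grp 0 :: 'k::comm_ring_1 M3) = mat 1"
  by (metis abs_F2_Nil rho_grp_abs_F2 foldr_Nil id_apply rho_word_def)

lemma rho_grp_minus_gen: "(rho_grp (- gen i) :: 'k::comm_ring_1 M3) = matrix_inv (rho_gen i)"
proof -
  have "- gen i = abs_F2 [(i, True)]" by (simp add: abs_F2_letter)
  then show ?thesis by (simp add: rho_grp_abs_F2 rho_word_def rho_letter_def)
qed

lemma mop_transpose_mult:
  "mop (transpose (A ** B)) =
   mop (transpose B) ** mop (transpose (A :: ('g::group_add \<Rightarrow>\<^sub>0 'k::comm_ring_1)^'n^'n))"
  by (simp add: vec_eq_iff matrix_matrix_mult_def mop_def transpose_def opG_sum opG_mult
      mult.commute[of "opG _"])

lemma mop_mat_one: "mop (mat 1 :: ('g::group_add \<Rightarrow>\<^sub>0 'k::comm_ring_1)^'n^'n) = mat 1"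
  by (simp add: vec_eq_iff mop_def mat_def opG_one opG_zero)

lemma mop_transpose_sum: "mop (transpose (sum f K)) = (\<Sum>g\<in>K. mop (transpose (f g)))"
  by (simp add: vec_eq_iff mop_def transpose_def sum_component opG_sum)

lemma mop_transpose_mscale:
  "mop (transpose (mscale (scal c) A)) =
   mscale (scal c) (mop (transpose (A :: ('g::group_add \<Rightarrow>\<^sub>0 'k::comm_ring_1)^'n^'n)))"
  by (simp add: vec_eq_iff mop_def transpose_def mscale_def opG_mult opG_single scal_mult_commute)

lemma mscale_matrix_mult_left:
  "A ** mscale (scal c) B = mscale (scal c) (A ** (B :: ('g::monoid_add \<Rightarrow>\<^sub>0 'k::comm_ring_1)^'n^'n))"
  by (simp add: vec_eq_iff matrix_matrix_mult_def mscale_def scal_mult_left_commute sum_distrib_left)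

lemma mscale_matrix_mult_right:
  "mscale (scal c) A ** B = mscale (scal c) (A ** (B :: ('g::monoid_add \<Rightarrow>\<^sub>0 'k::comm_ring_1)^'n^'n))"
  by (simp add: vec_eq_iff matrix_matrix_mult_def mscale_def mult.assoc sum_distrib_left)

lemma row_mat_col_add: "row_mat_col r (A + B) c = row_mat_col r A c + row_mat_col r B c"
  by (simp add: row_mat_col_def algebra_simps sum.distrib)

lemma row_mat_col_zero: "row_mat_col r 0 c = 0"
  by (simp add: row_mat_col_def)

lemma row_mat_col_sum: "row_mat_col r (sum f K) c = (\<Sum>g\<in>K. row_mat_col r (f g) c)"
  by (induction K rule: infinite_finite_induct) (simp_all add: row_mat_col_add row_mat_col_zero)

lemma row_mat_col_mscale:
  "row_mat_col r (mscale (scal c) A) c' = scal c * row_mat_col r A (c' :: ('g::monoid_add \<Rightarrow>\<^sub>0 'k::comm_ring_1)^3)"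
  by (simp add: row_mat_col_def mscale_def sum_distrib_left scal_mult_left_commute mult.assoc)

lemma row_mat_col_eq_matrix_vector_mult:
  "row_mat_col r M c = r$1 * (M *v c)$1 + r$2 * (M *v c)$2 + r$3 * (M *v (c :: 'a::semiring_1^3))$3"
  by (simp add: row_mat_col_def sum_3 matrix_vector_mult_nth3 algebra_simps)

lemma row_mat_col_outer:
  "row_mat_col r (A ** (\<chi> i j. c$i * r$j) ** B) c = row_mat_col r A c * row_mat_col r B (c :: 'a::semiring_1^3)"
  by (simp add: row_mat_col_def sum_3 matrix_matrix_mult_nth3 algebra_simps)

definition r_rho_grp :: "F2 \<Rightarrow> 'k::comm_ring_1 M3" where
  "r_rho_grp g = Dmat_inv ** mop (transpose (rho_grp (- g))) ** Dmat"

lemma r_rho_grp_add: "r_rho_grp (g + h) = (r_rho_grp g ** r_rho_grp h :: 'k::comm_ring_1 M3)"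
proof -
  have "(r_rho_grp (g + h) :: 'k M3) =
        Dmat_inv ** (mop (transpose (rho_grp (- g))) ** mop (transpose (rho_grp (- h)))) ** Dmat"
    by (simp add: r_rho_grp_def minus_add rho_grp_add mop_transpose_mult del: add_uminus_conv_diff)
  also have "\<dots> = Dmat_inv ** mop (transpose (rho_grp (- g))) ** (Dmat ** Dmat_inv)
                  ** mop (transpose (rho_grp (- h))) ** Dmat"
    by (simp add: Dmat_mult_inv matrix_mul_assoc)
  finally show ?thesis by (simp add: r_rho_grp_def matrix_mul_assoc)
qed

lemma r_rho_grp_zero: "r_rho_grp 0 = (mat 1 :: 'k::comm_ring_1 M3)"
  by (simp add: r_rho_grp_def rho_grp_zero mop_mat_one Dmat_inv_mult)

lemma r_rho_grp_X1: "r_rho_grp (gen True) = (mat 1 + (\<chi> i j. r_col $ i * r_row $ j) :: 'k::comm_ring_1 M3)"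
  unfolding r_rho_grp_def rho_grp_minus_gen rho_gen_def if_True matrix_inv_rhoX1
  by (rule mat3_eqI)
     (simp_all add: matrix_matrix_mult_nth3 mop_def transpose_def rhoX1inv_def Dmat_inv_def
        Dmat_def r_col_def r_row_def opG_simps group_ring_simps del: add_uminus_conv_diff)

definition Delta_Omat_grp :: "F2 \<Rightarrow> 'k::comm_ring_1 VB2" where
  "Delta_Omat_grp g = row_mat_col r_row (r_rho_grp g) r_col"

lemma Delta_Omat_eq_sum:
  fixes v :: "'k::comm_ring_1 VB"
  shows "Delta_Omat c v = scal c + (\<Sum>g\<in>Poly_Mapping.keys v.
     scal (Poly_Mapping.lookup v g) * Delta_Omat_grp g)"
proof -
  have "rho (opG v) = (\<Sum>g\<in>Poly_Mapping.keys v.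
          mscale (scal (Poly_Mapping.lookup v g)) (rho_grp (- g)) :: 'k M3)"
    unfolding rho_def keys_opG by (simp add: sum.reindex lookup_opG)
  then have "r_rho v = (\<Sum>g\<in>Poly_Mapping.keys v.
               mscale (scal (Poly_Mapping.lookup v g)) (r_rho_grp g :: 'k M3))"
    by (simp add: r_rho_def r_rho_grp_def matrix_inv_Dmat mop_transpose_sum mop_transpose_mscale
        matrix_mult_sum_left matrix_mult_sum_right mscale_matrix_mult_left mscale_matrix_mult_right
        matrix_mul_assoc)
  then show ?thesis
    by (simp add: Delta_Omat_def Delta_Omat_grp_def row_mat_col_sum row_mat_col_mscale)
qed

lemma r_rho_grp_add_X1_add:
  "(r_rho_grp (a + gen True + b) :: 'k::comm_ring_1 M3) =
   r_rho_grp a ** r_rho_grp b + r_rho_grp a ** (\<chi> i j. r_col $ i * r_row $ j) ** r_rho_grp b"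
  by (simp add: r_rho_grp_add r_rho_grp_X1 matrix_add_ldistrib matrix_add_rdistrib)

lemma twisted_mult_Delta_Omat_grp: "twisted_mult (Delta_Omat_grp :: F2 \<Rightarrow> 'k::comm_ring_1 VB2)"
  unfolding twisted_mult_def Delta_Omat_grp_def
proof (intro allI)
  fix a b
  show "row_mat_col r_row (r_rho_grp (a + gen True + b) :: 'k M3) r_col =
        row_mat_col r_row (r_rho_grp a) r_col * row_mat_col r_row (r_rho_grp b) r_col
        + row_mat_col r_row (r_rho_grp (a + b)) r_col"
    unfolding r_rho_grp_add_X1_add r_rho_grp_add[of a b] row_mat_col_add row_mat_col_outer
    by (rule add.commute)
qed

section \<open>The coefficients on powers of \<open>X\<^sub>0\<close>\<close>

abbreviation Y0_conj :: "'k::comm_ring_1 VB2" where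
  "Y0_conj \<equiv> YYi True * YY False * YY True"

definition r_rho_X0 :: "'k::comm_ring_1 M3" where
  "r_rho_X0 = mat3 [XX False, 0, 0]
     [0, XXi True * Y0_conj,
         XXi True * Y0_conj - XXi True * XXi True * XXi False * (YYi True * YY False * YY False * YY True)]
     [0, XX False - XX False * XX True,
         Y0_conj + XX False - XX False * XXi True * XXi False * Y0_conj]"

lemma r_rho_grp_X0: "r_rho_grp (gen False) = (r_rho_X0 :: 'k::comm_ring_1 M3)"
  unfolding r_rho_grp_def rho_grp_minus_gen rho_gen_def if_False matrix_inv_rhoX0
  by (rule mat3_eqI)
     (simp_all add: matrix_matrix_mult_nth3 mop_def transpose_def rhoX0inv_def Dmat_inv_def
        Dmat_def r_rho_X0_def opG_simps group_ring_simps del: add_uminus_conv_diff)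

definition w_left :: "int \<Rightarrow> 'k::comm_ring_1 VB2" where
  "w_left k = grp (zpow (gen False) k, 0) * (XX True - 1)"

definition w_right :: "int \<Rightarrow> 'k::comm_ring_1 VB2" where
  "w_right k = grp (0, zpow (gen False) k) * (YY True - 1)"

text \<open>The factor \<open>Y\<^sub>1\<^sup>-\<^sup>1\<close> turns left multiplication by \<open>Y0_conj\<close> into a shift of \<open>j\<close>.\<close>
definition w_cross :: "int \<Rightarrow> int \<Rightarrow> 'k::comm_ring_1 VB2" where
  "w_cross k j = w_left k * (YYi True * w_right j)"

definition w_conv :: "int \<Rightarrow> 'k::comm_ring_1 VB2" where
  "w_conv n = gsum 1 (n - 1) (\<lambda>k. w_cross k (n - k))"

definition col_X0pow :: "int \<Rightarrow> 'k::comm_ring_1 VB2 ^ 3" where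
  "col_X0pow n = vector [w_left n * YYi True, XXi True * (w_conv n - YYi True * w_right n),
                         w_left n * (1 - YYi True) + w_conv n]"

lemma tens_X0pow_w:
  "tens (X0pow n * (X True - 1)) 1 = (w_left n :: 'k::comm_ring_1 VB2)"
  "tens 1 (X0pow n * (X True - 1)) = (w_right n :: 'k::comm_ring_1 VB2)"
  "tens (X0pow k * (X True - 1)) (X0pow j * (X True - 1)) = (w_left k * w_right j :: 'k::comm_ring_1 VB2)"
proof -
  have X0pow_w: "X0pow k * (X True - 1) =
    grp (zpow (gen False) k + gen True) - (grp (zpow (gen False) k) :: 'k VB)" for k
    by (simp add: group_ring_simps del: add_uminus_conv_diff)
  show "tens (X0pow n * (X True - 1)) 1 = (w_left n :: 'k VB2)"
    "tens 1 (X0pow n * (X True - 1)) = (w_right n :: 'k VB2)"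
    "tens (X0pow k * (X True - 1)) (X0pow j * (X True - 1)) = (w_left k * w_right j :: 'k VB2)"
    unfolding X0pow_w tens_diff_left tens_diff_right tens_grp_one tens_one_grp tens_grp
    by (simp_all add: w_left_def w_right_def group_ring_simps del: add_uminus_conv_diff)
qed

lemma Y0_conj_mult_w_cross: "Y0_conj * w_cross k j = (w_cross k (j + 1) :: 'k::comm_ring_1 VB2)"
  by (simp add: w_cross_def w_left_def w_right_def zpow_simps group_ring_simps
      del: add_uminus_conv_diff)

lemma XX0_mult_w_cross: "XX False * w_cross k j = (w_cross (k + 1) j :: 'k::comm_ring_1 VB2)"
  by (simp add: w_cross_def w_left_def w_right_def zpow_simps group_ring_simps
      del: add_uminus_conv_diff)

lemma Y0_conj_mult_w_conv: "Y0_conj * w_conv n = w_conv (n + 1) - (w_cross n 1 :: 'k::comm_ring_1 VB2)"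
proof -
  have "Y0_conj * w_conv n = gsum 1 (n - 1) (\<lambda>k. w_cross k (n + 1 - k) :: 'k VB2)"
    unfolding w_conv_def gsum_mult_left
    by (rule gsum_cong) (simp add: Y0_conj_mult_w_cross diff_add_eq)
  also have "\<dots> = w_conv (n + 1) - w_cross n 1"
    using gsum_last[of 1 n "\<lambda>k. w_cross k (n + 1 - k) :: 'k VB2"] by (simp add: w_conv_def)
  finally show ?thesis .
qed

lemma XX0_mult_w_conv: "XX False * w_conv n = w_conv (n + 1) - (w_cross 1 n :: 'k::comm_ring_1 VB2)"
proof -
  have "XX False * w_conv n = gsum 1 (n - 1) (\<lambda>k. (\<lambda>k. w_cross k (n + 1 - k)) (k + 1) :: 'k VB2)"
    unfolding w_conv_def gsum_mult_left by (rule gsum_cong) (simp add: XX0_mult_w_cross)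
  also have "\<dots> = gsum 2 n (\<lambda>k. w_cross k (n + 1 - k))"
    using gsum_shift[of 1 "n - 1" "\<lambda>k. w_cross k (n + 1 - k) :: 'k VB2"] by simp
  also have "\<dots> = w_conv (n + 1) - w_cross 1 n"
    using gsum_first[of 1 n "\<lambda>k. w_cross k (n + 1 - k) :: 'k VB2"] by (simp add: w_conv_def)
  finally show ?thesis .
qed

lemma w_conv_diff_Y0_conj_mult:
  "w_conv n - XXi False * (Y0_conj * w_conv n) = XXi False * (w_cross n 1 - (w_cross 1 n :: 'k::comm_ring_1 VB2))"
proof -
  have "w_conv n - XXi False * (Y0_conj * w_conv n)
      = XXi False * (XX False * w_conv n - Y0_conj * (w_conv n :: 'k VB2))"
    by (simp add: group_ring_simps del: add_uminus_conv_diff)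
  then show ?thesis by (simp add: Y0_conj_mult_w_conv XX0_mult_w_conv)
qed

lemma r_rho_X0_col_X0pow_nth2:
  "(r_rho_X0 *v col_X0pow n) $ 2 = (col_X0pow (n + 1) $ 2 :: 'k::comm_ring_1 VB2)"
proof -
  txt \<open>The entry is affine in \<open>w_conv n\<close>; only its linear part is rewritten with the
    recurrences for \<open>w_conv\<close>, the constant part \<open>lin 0\<close> is left to normalisation.\<close>
  define lin where "lin = (\<lambda>x::'k VB2. XXi True * Y0_conj * (XXi True * (x - YYi True * w_right n))
    + (XXi True * Y0_conj - XXi True * XXi True * XXi False * (YYi True * YY False * YY False * YY True))
      * (w_left n * (1 - YYi True) + x))"
  have "(r_rho_X0 *v col_X0pow n) $ 2 = lin (w_conv n)"
    by (simp add: matrix_vector_mult_nth3 r_rho_X0_def col_X0pow_def lin_def)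
  also have "\<dots> = XXi True * (Y0_conj * w_conv n)
      + XXi True * XXi True * (Y0_conj * (w_conv n - XXi False * (Y0_conj * w_conv n))) + lin 0"
    by (simp add: lin_def group_ring_simps del: add_uminus_conv_diff)
  also have "\<dots> = XXi True * (Y0_conj * w_conv n)
      + XXi True * XXi True * (Y0_conj * (XXi False * (w_cross n 1 - w_cross 1 n))) + lin 0"
    by (simp only: w_conv_diff_Y0_conj_mult)
  also have "\<dots> = XXi True * (w_conv (n + 1) - w_cross n 1)
      + XXi True * XXi True * (Y0_conj * (XXi False * (w_cross n 1 - w_cross 1 n))) + lin 0"
    by (simp only: Y0_conj_mult_w_conv)
  also have "\<dots> = col_X0pow (n + 1) $ 2"
    by (simp add: col_X0pow_def lin_def w_cross_def w_left_def w_right_def zpow_simps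
        group_ring_simps del: add_uminus_conv_diff)
  finally show ?thesis .
qed

lemma r_rho_X0_col_X0pow_nth3:
  "(r_rho_X0 *v col_X0pow n) $ 3 = (col_X0pow (n + 1) $ 3 :: 'k::comm_ring_1 VB2)"
proof -
  define lin where "lin = (\<lambda>x::'k VB2. (XX False - XX False * XX True) * (XXi True * (x - YYi True * w_right n))
    + (Y0_conj + XX False - XX False * XXi True * XXi False * Y0_conj) * (w_left n * (1 - YYi True) + x))"
  have "(r_rho_X0 *v col_X0pow n) $ 3 = lin (w_conv n)"
    by (simp add: matrix_vector_mult_nth3 r_rho_X0_def col_X0pow_def lin_def)
  also have "\<dots> = Y0_conj * w_conv n
      + XX False * XXi True * (w_conv n - XXi False * (Y0_conj * w_conv n)) + lin 0"
    by (simp add: lin_def group_ring_simps del: add_uminus_conv_diff)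
  also have "\<dots> = Y0_conj * w_conv n
      + XX False * XXi True * (XXi False * (w_cross n 1 - w_cross 1 n)) + lin 0"
    by (simp only: w_conv_diff_Y0_conj_mult)
  also have "\<dots> = (w_conv (n + 1) - w_cross n 1)
      + XX False * XXi True * (XXi False * (w_cross n 1 - w_cross 1 n)) + lin 0"
    by (simp only: Y0_conj_mult_w_conv)
  also have "\<dots> = col_X0pow (n + 1) $ 3"
    by (simp add: col_X0pow_def lin_def w_cross_def w_left_def w_right_def zpow_simps
        group_ring_simps del: add_uminus_conv_diff)
  finally show ?thesis .
qed

lemma r_rho_X0_col_X0pow: "r_rho_X0 *v col_X0pow n = (col_X0pow (n + 1) :: 'k::comm_ring_1 VB2 ^ 3)"
proof (rule vec3_eqI)
  show "(r_rho_X0 *v col_X0pow n) $ 1 = (col_X0pow (n + 1) $ 1 :: 'k VB2)"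
    by (simp add: matrix_vector_mult_nth3 r_rho_X0_def col_X0pow_def w_left_def zpow_simps
        group_ring_simps del: add_uminus_conv_diff)
qed (fact r_rho_X0_col_X0pow_nth2 r_rho_X0_col_X0pow_nth3)+

lemma r_rho_grp_X0pow_col:
  "r_rho_grp (zpow (gen False) n) *v r_col = (col_X0pow n :: 'k::comm_ring_1 VB2 ^ 3)"
proof (induction n rule: int_induct[where k=0])
  case base
  show ?case
    by (rule vec3_eqI)
       (simp_all add: r_rho_grp_zero col_X0pow_def r_col_def w_conv_def gsum_def w_cross_def
          w_left_def w_right_def group_ring_simps del: add_uminus_conv_diff)
next
  case (step1 i)
  then show ?case
    by (simp add: zpow_succ r_rho_grp_add r_rho_grp_X0 r_rho_X0_col_X0pow
        flip: matrix_vector_mul_assoc)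
next
  case (step2 i)
  have "r_rho_grp (zpow (gen False) (i - 1)) *v r_col
      = r_rho_grp (- gen False) *v (r_rho_grp (gen False) *v (col_X0pow (i - 1) :: 'k VB2 ^ 3))"
    using step2 r_rho_X0_col_X0pow[where 'k='k, of "i - 1"]
    by (simp add: zpow_pred r_rho_grp_add r_rho_grp_X0 flip: matrix_vector_mul_assoc)
  then show ?case
    by (simp add: matrix_vector_mul_assoc r_rho_grp_zero flip: r_rho_grp_add)
qed

lemma Delta_Omat_grp_X0pow_w:
  "Delta_Omat_grp (zpow (gen False) n) =
     w_left n + w_right n - gsum 1 (n - 1) (\<lambda>k. w_left k * w_right (n - k) :: 'k::comm_ring_1 VB2)"
proof -
  have "Delta_Omat_grp (zpow (gen False) n) = w_left n + w_right n - YY True * (w_conv n :: 'k VB2)"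
    by (simp add: Delta_Omat_grp_def row_mat_col_eq_matrix_vector_mult r_rho_grp_X0pow_col r_row_def
        col_X0pow_def w_left_def group_ring_simps del: add_uminus_conv_diff)
  also have "YY True * (w_conv n :: 'k VB2) = gsum 1 (n - 1) (\<lambda>k. w_left k * w_right (n - k))"
    unfolding w_conv_def gsum_mult_left
    by (rule gsum_cong) (simp add: w_cross_def w_left_def group_ring_simps del: add_uminus_conv_diff)
  finally show ?thesis .
qed

lemma Delta_Omat_grp_X0pow:
  "Delta_Omat_grp (zpow (gen False) n) =
     tens (X0pow n * (X True - 1)) 1 + tens 1 (X0pow n * (X True - 1))
   - gsum 1 (n - 1) (\<lambda>k. tens (X0pow k * (X True - 1)) (X0pow (n - k) * (X True - 1)) :: 'k::comm_ring_1 VB2)"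
  by (simp add: Delta_Omat_grp_X0pow_w tens_X0pow_w)

lemma one_plus_Delta_Omat_grp_zero: "1 + Delta_Omat_grp 0 = (grp (gen True, gen True) :: 'k::comm_ring_1 VB2)"
proof -
  have zero: "Delta_Omat_grp 0 = w_left 0 + w_right 0 - (gsum 1 (- 1) (\<lambda>k. w_left k * w_right (- k)) :: 'k VB2)"
    using Delta_Omat_grp_X0pow_w[where 'k='k, of 0] by simp
  show ?thesis unfolding zero
    by (simp add: gsum_def w_left_def w_right_def group_ring_simps del: add_uminus_conv_diff)
qed

section \<open>The coproduct on \<open>W\<^sup>B\<close>\<close>

lemma WB_I: "scal c + v * (X True - 1) \<in> WB"
  unfolding WB_def by blast

lemma WB_E:
  assumes "a \<in> WB"
  obtains c v where "a = scal c + v * (X True - 1)"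
  using assms unfolding WB_def by blast

lemma add_in_WB:
  assumes "a \<in> WB" "b \<in> WB"
  shows "a + b \<in> (WB :: 'k::comm_ring_1 VB set)"
proof -
  obtain c v c' v' where "a = scal c + v * (X True - 1)" "b = scal c' + v' * (X True - 1)"
    using assms by (meson WB_E)
  then have "a + b = scal (c + c') + (v + v') * (X True - 1)"
    by (simp add: single_add distrib_right)
  then show ?thesis by (simp add: WB_I)
qed

lemma scal_mult_in_WB:
  assumes "a \<in> WB"
  shows "scal c * a \<in> (WB :: 'k::comm_ring_1 VB set)"
proof -
  obtain c' v where "a = scal c' + v * (X True - 1)"
    using assms by (rule WB_E)
  then have "scal c * a = scal (c * c') + (scal c * v) * (X True - 1)"
    by (simp add: distrib_left mult_single mult.assoc)
  then show ?thesis by (simp add: WB_I)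
qed

lemma uminus_in_WB: "a \<in> WB \<Longrightarrow> - a \<in> (WB :: 'k::comm_ring_1 VB set)"
  using scal_mult_in_WB[of a "- 1"] by (simp add: single_uminus)

lemma grp_mult_in_WB: "grp g * (X True - 1) \<in> (WB :: 'k::comm_ring_1 VB set)"
  using WB_I[of 0 "grp g"] by simp

lemma zero_in_WB: "0 \<in> WB"
  using WB_I[of 0 0] by simp

lemma sum_in_WB: "(\<And>g. g \<in> K \<Longrightarrow> f g \<in> WB) \<Longrightarrow> sum f K \<in> (WB :: 'k::comm_ring_1 VB set)"
  by (induction K rule: infinite_finite_induct) (simp_all add: zero_in_WB add_in_WB)

lemma grp_X1_minus_one_mult:
  "grp a * (X True - 1) * (grp b * (X True - 1)) =
   grp (a + gen True + b) * (X True - 1) - grp (a + b) * (X True - (1 :: 'k::comm_ring_1 VB))"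
  by (simp add: group_ring_simps del: add_uminus_conv_diff)

lemma mult_X1_minus_one_expand:
  "v * (X True - 1) = (\<Sum>g\<in>Poly_Mapping.keys v.
     scal (Poly_Mapping.lookup v g) * (grp g * (X True - 1)) :: 'k::comm_ring_1 VB)"
proof -
  have "v * (X True - 1) = (\<Sum>g\<in>Poly_Mapping.keys v.
          Poly_Mapping.single g (Poly_Mapping.lookup v g)) * (X True - 1 :: 'k VB)"
    by (simp only: flip: poly_mapping_sum_single)
  also have "\<dots> = (\<Sum>g\<in>Poly_Mapping.keys v.
      Poly_Mapping.single g (Poly_Mapping.lookup v g) * (X True - 1))"
    by (rule sum_distrib_right)
  also have "\<dots> = (\<Sum>g\<in>Poly_Mapping.keys v.
      scal (Poly_Mapping.lookup v g) * (grp g * (X True - 1)))"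
    by (rule sum.cong[OF refl]) (rule single_mult_eq_scal_grp)
  finally show ?thesis .
qed

locale WB_algebra_hom =
  fixes Delta :: "'k::comm_ring_1 VB \<Rightarrow> 'k VB2"
  assumes Delta_one: "Delta 1 = 1"
    and Delta_add: "a \<in> WB \<Longrightarrow> b \<in> WB \<Longrightarrow> Delta (a + b) = Delta a + Delta b"
    and Delta_scal_mult: "a \<in> WB \<Longrightarrow> Delta (scal c * a) = scal c * Delta a"
    and Delta_mult: "a \<in> WB \<Longrightarrow> b \<in> WB \<Longrightarrow> Delta (a * b) = Delta a * Delta b"
begin

lemma Delta_zero: "Delta 0 = 0"
  using Delta_scal_mult[of 1 0] WB_I[of 1 0] by simp

lemma Delta_diff: "a \<in> WB \<Longrightarrow> b \<in> WB \<Longrightarrow> Delta (a - b) = Delta a - Delta b"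
  using Delta_add[of a "- b"] Delta_scal_mult[of b "- 1"] uminus_in_WB[of b]
  by (simp add: single_uminus)

lemma Delta_sum: "(\<And>g. g \<in> K \<Longrightarrow> f g \<in> WB) \<Longrightarrow> Delta (sum f K) = (\<Sum>g\<in>K. Delta (f g))"
  by (induction K rule: infinite_finite_induct) (simp_all add: Delta_zero Delta_add sum_in_WB)

lemma twisted_mult_Delta: "twisted_mult (\<lambda>g. Delta (grp g * (X True - 1)))"
  unfolding twisted_mult_def
proof (intro allI)
  fix a b
  have "Delta (grp a * (X True - 1)) * Delta (grp b * (X True - 1))
      = Delta (grp a * (X True - 1) * (grp b * (X True - 1)))"
    by (simp add: Delta_mult grp_mult_in_WB)
  also have "\<dots> = Delta (grp (a + gen True + b) * (X True - 1)) - Delta (grp (a + b) * (X True - 1))"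
    by (simp only: grp_X1_minus_one_mult Delta_diff grp_mult_in_WB)
  finally show "Delta (grp (a + gen True + b) * (X True - 1)) =
    Delta (grp a * (X True - 1)) * Delta (grp b * (X True - 1)) + Delta (grp (a + b) * (X True - 1))"
    by (simp add: eq_diff_eq)
qed

lemma Delta_expand:
  "Delta (scal c + v * (X True - 1)) =
   scal c + (\<Sum>g\<in>Poly_Mapping.keys v. scal (Poly_Mapping.lookup v g) * Delta (grp g * (X True - 1)))"
proof -
  have "Delta (scal c) = scal c"
    using Delta_scal_mult[of 1 c] WB_I[of 1 0] by (simp add: Delta_one)
  moreover have "scal c \<in> WB" "v * (X True - 1) \<in> WB"
    using WB_I[of c 0] WB_I[of 0 v] by simp_all
  ultimately have "Delta (scal c + v * (X True - 1)) = scal c + Delta (v * (X True - 1))"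
    by (simp add: Delta_add)
  also have "Delta (v * (X True - 1)) = (\<Sum>g\<in>Poly_Mapping.keys v.
      scal (Poly_Mapping.lookup v g) * Delta (grp g * (X True - 1)))"
    unfolding mult_X1_minus_one_expand[of v]
    by (simp add: Delta_sum Delta_scal_mult scal_mult_in_WB grp_mult_in_WB)
  finally show ?thesis .
qed

end

theorem theorem3p5:
  fixes Delta :: "'k::comm_ring_1 VB \<Rightarrow> 'k VB2"
  assumes Qalg: "\<forall>n::nat. 0 < n \<longrightarrow> (\<exists>x::'k. of_nat n * x = 1)"
    and one: "Delta 1 = 1"
    and add: "\<forall>a\<in>WB. \<forall>b\<in>WB. Delta (a + b) = Delta a + Delta b"
    and smul: "\<forall>c. \<forall>a\<in>WB. Delta (scal c * a) = scal c * Delta a"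
    and mult: "\<forall>a\<in>WB. \<forall>b\<in>WB. Delta (a * b) = Delta a * Delta b"
    and gen1: "Delta (Xinv True) = tens (Xinv True) (Xinv True)"
    and gen0: "\<forall>n::int. Delta (X0pow n * (X True - 1)) =
                 tens (X0pow n * (X True - 1)) 1 + tens 1 (X0pow n * (X True - 1))
               - gsum 1 (n - 1) (\<lambda>k. tens (X0pow k * (X True - 1)) (X0pow (n - k) * (X True - 1)))"
  shows "\<forall>c v. Delta (scal c + v * (X True - 1)) = Delta_Omat c v"
proof (intro allI)
  fix c v
  interpret WB_algebra_hom Delta
    using one add smul mult by unfold_locales blast+
  have agree: "Delta_Omat_grp = (\<lambda>g. Delta (grp g * (X True - 1)))"
  proof (rule twisted_mult_eqI[OF twisted_mult_Delta_Omat_grp twisted_mult_Delta])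
    show "Delta_Omat_grp (zpow (gen False) n) = Delta (X0pow n * (X True - 1))" for n
      using gen0 by (simp add: Delta_Omat_grp_X0pow)
    show "(1 + Delta_Omat_grp 0) * grp (- gen True, - gen True) = 1"
      by (simp add: one_plus_Delta_Omat_grp_zero mult_single flip: zero_prod_def)
  qed
  show "Delta (scal c + v * (X True - 1)) = Delta_Omat c v"
    by (simp add: Delta_expand Delta_Omat_eq_sum agree)
qed

end
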